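(* Let $\hat{\boldsymbol\mu}$ be a location estimator, assigning to every $n\times d$ data matrix a vector in $\mathbb R^d$, which is orthogonally equivariant: for all $\boldsymbol v\in\mathbb R^d$, all $d\times d$ orthogonal matrices $\boldsymbol A$ and all $n\times d$ data matrices $\boldsymbol X$, $\hat{\boldsymbol\mu}(\boldsymbol 1_n\boldsymbol v^{\top}+\boldsymbol X\boldsymbol A)=\boldsymbol v+\boldsymbol A^{\top}\hat{\boldsymbol\mu}(\boldsymbol X)$. Then whenever all rows of a data matrix $\boldsymbol X$ lie in a lower-dimensional affine subspace of $\mathbb R^d$, $\hat{\boldsymbol\mu}(\boldsymbol X)$ lies in that subspace as well. Consequently, for every $n\times d$ data matrix $\boldsymbol X$, $\varepsilon^*_n(\hat{\boldsymbol\mu},\boldsymbol X)\leqslant \lceil n/d\rceil/n$.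
   Context: Rows of the $n\times d$ data matrix are the data points; $\boldsymbol 1_n$ is the $n\times1$ vector of ones. For an integer $m\ge0$, $\boldsymbol X^m$ denotes any matrix obtained from $\boldsymbol X$ by replacing at most $m$ cells in each column by arbitrary real values. The finite-sample cellwise breakdown value is $\varepsilon^*_n(\hat{\boldsymbol\mu},\boldsymbol X)=\min\{\tfrac{m}{n}:\ \sup_{\boldsymbol X^m}\|\hat{\boldsymbol\mu}(\boldsymbol X^m)-\hat{\boldsymbol\mu}(\boldsymbol X)\|=\infty\}$. *)

theory Defs
  imports "HOL-Analysis.Analysis"
begin

text \<open>Data matrices are n x d matrices of type real^'d^'n: row i (a data point in R^d)
  is X $ i, cell (i,j) is X $ i $ j.  n = CARD('n), d = CARD('d).\<close>

definition orth_equivariant :: "(real^'d^'n \<Rightarrow> real^'d) \<Rightarrow> bool" where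
  "orth_equivariant mu \<longleftrightarrow>
     (\<forall>(v::real^'d) (A::real^'d^'d) (X::real^'d^'n). orthogonal_matrix A \<longrightarrow>
        mu ((\<chi> i. v) + X ** A) = v + transpose A *v mu X)"

definition cell_contaminations :: "nat \<Rightarrow> real^'d^'n \<Rightarrow> (real^'d^'n) set" where
  "cell_contaminations m X = {Y. \<forall>j. card {i. Y $ i $ j \<noteq> X $ i $ j} \<le> m}"

definition cellwise_breakdown :: "(real^'d^'n \<Rightarrow> real^'d) \<Rightarrow> real^'d^'n \<Rightarrow> real" where
  "cellwise_breakdown mu X =
     Inf {real m / real CARD('n) | m.
            \<not> (\<exists>B. \<forall>Y\<in>cell_contaminations m X. norm (mu Y - mu X) \<le> B)}"

end

theory Submission
  imports Defs
begin

text \<open>If all rows of X lie on a hyperplane, the reflection in that hyperplane is an orthogonal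
  change of coordinates plus a translation that leaves X unchanged; by equivariance it also
  leaves the estimate unchanged, and the fixed points of a reflection are exactly the hyperplane.
  Every affine subspace is an intersection of hyperplanes, which gives the first claim.
  For the breakdown bound, with m = \<lceil>n/d\<rceil> cells per column one can change one cell in every
  row so that all rows have coordinate sum t. The estimate then has coordinate sum t as well,
  so it is unbounded as t varies.\<close>

lemma matrix_mult_transpose_row:
  fixes X :: "real^'d^'n" and M :: "real^'d^'d"
  shows "(X ** transpose M) $ i = M *v X $ i"
  by (simp add: vec_eq_iff matrix_matrix_mult_def matrix_vector_mult_def transpose_def mult.commute)

definition reflect_along :: "'a::real_inner \<Rightarrow> 'a \<Rightarrow> 'a" where
  "reflect_along a x = x - (2 * (a \<bullet> x) / (a \<bullet> a)) *\<^sub>R a"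

lemma linear_reflect_along: "linear (reflect_along a)"
  unfolding reflect_along_def
  by (rule linearI) (auto simp: algebra_simps add_divide_distrib)

lemma orthogonal_transformation_reflect_along:
  assumes "a \<noteq> 0"
  shows "orthogonal_transformation (reflect_along a)"
  unfolding orthogonal_transformation_def
proof (intro conjI allI linear_reflect_along)
  fix v w
  show "reflect_along a v \<bullet> reflect_along a w = v \<bullet> w"
    using assms unfolding reflect_along_def
    by (simp add: inner_diff_left inner_diff_right inner_commute field_simps power2_eq_square)
qed

text \<open>The map x \<mapsto> 2b/(a\<bullet>a) a + reflect_along a x is the reflection in the hyperplane a \<bullet> x = b.\<close>

lemma hyperplane_reflection_fixed_iff:
  assumes "a \<noteq> 0"
  shows "(2 * b / (a \<bullet> a)) *\<^sub>R a + reflect_along a x = x \<longleftrightarrow> a \<bullet> x = b"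
proof -
  have "(2 * b / (a \<bullet> a)) *\<^sub>R a + reflect_along a x = x - (2 * (a \<bullet> x - b) / (a \<bullet> a)) *\<^sub>R a"
    by (simp add: reflect_along_def diff_divide_distrib algebra_simps)
  then show ?thesis
    using assms by simp
qed

lemma orth_equivariant_mem_hyperplane:
  fixes mu :: "real^'d^'n \<Rightarrow> real^'d"
  assumes mu: "orth_equivariant mu" and "a \<noteq> 0" and rows: "\<And>i. a \<bullet> X $ i = b"
  shows "a \<bullet> mu X = b"
proof -
  define R where "R = reflect_along a"
  define v where "v = (2 * b / (a \<bullet> a)) *\<^sub>R a"
  have matrix_R: "matrix R *v x = R x" for x
    unfolding R_def by (simp add: linear_reflect_along matrix_works)
  have "orthogonal_matrix (transpose (matrix R))"
    using orthogonal_transformation_reflect_along[OF \<open>a \<noteq> 0\<close>]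
    unfolding R_def orthogonal_transformation_matrix by simp
  then have "mu ((\<chi> i. v) + X ** transpose (matrix R)) = v + R (mu X)"
    using mu unfolding orth_equivariant_def by (simp add: matrix_R)
  moreover have "(\<chi> i. v) + X ** transpose (matrix R) = X"
  proof -
    have "v + R (X $ i) = X $ i" for i
      using hyperplane_reflection_fixed_iff[OF \<open>a \<noteq> 0\<close>] rows unfolding R_def v_def by simp
    then show ?thesis
      by (simp add: vec_eq_iff[of _ X] matrix_mult_transpose_row matrix_R)
  qed
  ultimately have "v + R (mu X) = mu X"
    by simp
  then show ?thesis
    using hyperplane_reflection_fixed_iff[OF \<open>a \<noteq> 0\<close>] by (simp add: R_def v_def)
qed

lemma orth_equivariant_mem_affine:
  fixes mu :: "real^'d^'n \<Rightarrow> real^'d"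
  assumes mu: "orth_equivariant mu" and "affine S" and rows: "\<And>i. X $ i \<in> S"
  shows "mu X \<in> S"
proof -
  obtain \<F> where S_eq: "affine hull S = \<Inter>\<F>"
    and hyperplanes: "\<And>h. h \<in> \<F> \<Longrightarrow> \<exists>a b. a \<noteq> 0 \<and> h = {x. a \<bullet> x = b}"
    using affine_hull_finite_intersection_hyperplanes by metis
  have "mu X \<in> h" if "h \<in> \<F>" for h
  proof -
    obtain a b where "a \<noteq> 0" and h: "h = {x. a \<bullet> x = b}"
      using hyperplanes[OF \<open>h \<in> \<F>\<close>] by blast
    have "X $ i \<in> h" for i
      using rows \<open>affine S\<close> S_eq \<open>h \<in> \<F>\<close> by (metis InterE affine_hull_eq)
    then show ?thesis
      using orth_equivariant_mem_hyperplane[OF mu \<open>a \<noteq> 0\<close>] h by simp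
  qed
  then show ?thesis
    using \<open>affine S\<close> S_eq by (metis InterI affine_hull_eq)
qed

lemma exists_map_with_small_fibres:
  assumes "CARD('a) \<le> m * CARD('b)"
  obtains g :: "'a::finite \<Rightarrow> 'b::finite" where "\<And>j. card {i. g i = j} \<le> m"
proof -
  obtain f :: "'a \<Rightarrow> 'b \<times> nat" where f: "range f \<subseteq> UNIV \<times> {..<m}" "inj f"
    using card_le_inj[of "UNIV :: 'a set" "(UNIV :: 'b set) \<times> {..<m}"] assms
    by (auto simp: card_cartesian_product mult.commute)
  have "card {i. fst (f i) = j} \<le> m" for j
  proof -
    have "f ` {i. fst (f i) = j} \<subseteq> {j} \<times> {..<m}"
      using f(1) by (auto simp: image_subset_iff mem_Times_iff)
    then have "card {i. fst (f i) = j} \<le> card ({j} \<times> {..<m})"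
      by (rule card_inj_on_le[OF inj_on_subset[OF f(2) subset_UNIV]]) simp
    then show ?thesis
      by simp
  qed
  then show ?thesis
    using that[of "fst \<circ> f"] by simp
qed

lemma exists_contamination_with_row_sums:
  fixes X :: "real^'d^'n" and g :: "'n \<Rightarrow> 'd"
  assumes fibres: "\<And>j. card {i. g i = j} \<le> m"
  shows "\<exists>Y \<in> cell_contaminations m X. \<forall>i. 1 \<bullet> Y $ i = t"
proof
  define Y where "Y = (\<chi> i. X $ i + (t - 1 \<bullet> X $ i) *\<^sub>R axis (g i) 1)"
  show "\<forall>i. 1 \<bullet> Y $ i = t"
    by (simp add: Y_def inner_add_right inner_axis)
  have "card {i. Y $ i $ j \<noteq> X $ i $ j} \<le> m" for j
  proof -
    have "{i. Y $ i $ j \<noteq> X $ i $ j} \<subseteq> {i. g i = j}"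
      by (auto simp: Y_def axis_def)
    then show ?thesis
      using card_mono[of "{i. g i = j}"] fibres[of j] by (meson finite order_trans)
  qed
  then show "Y \<in> cell_contaminations m X"
    by (simp add: cell_contaminations_def)
qed

lemma unbounded_if_every_level_attained:
  fixes f :: "'a \<Rightarrow> 'b::real_inner"
  assumes "\<And>t. \<exists>Y\<in>C. a \<bullet> f Y = t"
  shows "\<not> (\<exists>B. \<forall>Y\<in>C. norm (f Y - f X) \<le> B)"
proof
  assume "\<exists>B. \<forall>Y\<in>C. norm (f Y - f X) \<le> B"
  then obtain B where B: "\<And>Y. Y \<in> C \<Longrightarrow> norm (f Y - f X) \<le> B"
    by blast
  obtain Y where "Y \<in> C" and level: "a \<bullet> f Y = norm a * (B + norm (f X)) + 1"
    using assms by blast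
  have "norm (f Y) \<le> B + norm (f X)"
    using B[OF \<open>Y \<in> C\<close>] norm_triangle_ineq2[of "f Y" "f X"] by simp
  then have "a \<bullet> f Y \<le> norm a * (B + norm (f X))"
    using norm_cauchy_schwarz[of a "f Y"] mult_left_mono[OF _ norm_ge_zero[of a]] by (meson order_trans)
  then show False
    using level by simp
qed

lemma cellwise_breakdown_le:
  fixes mu :: "real^'d^'n \<Rightarrow> real^'d"
  assumes "\<not> (\<exists>B. \<forall>Y\<in>cell_contaminations m X. norm (mu Y - mu X) \<le> B)"
  shows "cellwise_breakdown mu X \<le> real m / real CARD('n)"
  unfolding cellwise_breakdown_def
  by (rule cInf_lower) (use assms in \<open>auto intro: bdd_belowI[of _ 0]\<close>)

lemma orth_equivariant_cellwise_breakdown_le: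
  fixes mu :: "real^'d^'n \<Rightarrow> real^'d"
  assumes mu: "orth_equivariant mu" and "CARD('n) \<le> m * CARD('d)"
  shows "cellwise_breakdown mu X \<le> real m / real CARD('n)"
proof (rule cellwise_breakdown_le, rule unbounded_if_every_level_attained)
  obtain g :: "'n \<Rightarrow> 'd" where fibres: "\<And>j. card {i. g i = j} \<le> m"
    using exists_map_with_small_fibres assms(2) by blast
  fix t
  obtain Y where "Y \<in> cell_contaminations m X" and "\<And>i. 1 \<bullet> Y $ i = t"
    using exists_contamination_with_row_sums[OF fibres] by blast
  moreover have "(1 :: real^'d) \<noteq> 0"
    by (simp add: vec_eq_iff)
  ultimately show "\<exists>Y\<in>cell_contaminations m X. 1 \<bullet> mu Y = t"
    using orth_equivariant_mem_hyperplane[OF mu] by blast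
qed

theorem corollary1:
  fixes mu :: "real^'d^'n \<Rightarrow> real^'d"
  assumes "orth_equivariant mu"
  shows "(\<forall>(X::real^'d^'n) (S::(real^'d) set).
            affine S \<and> aff_dim S < int CARD('d) \<and> (\<forall>i. X $ i \<in> S) \<longrightarrow> mu X \<in> S)
       \<and> (\<forall>X::real^'d^'n. cellwise_breakdown mu X
            \<le> of_int \<lceil>real CARD('n) / real CARD('d)\<rceil> / real CARD('n))"
proof (intro conjI allI impI)
  fix X :: "real^'d^'n" and S
  assume "affine S \<and> aff_dim S < int CARD('d) \<and> (\<forall>i. X $ i \<in> S)"
  then show "mu X \<in> S"
    using orth_equivariant_mem_affine[OF assms] by blast
next
  fix X :: "real^'d^'n"
  define m where "m = nat \<lceil>real CARD('n) / real CARD('d)\<rceil>"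
  have "real CARD('n) \<le> real m * real CARD('d)"
    unfolding m_def by (simp add: pos_divide_le_eq [symmetric])
  then have "CARD('n) \<le> m * CARD('d)"
    by (metis of_nat_le_iff of_nat_mult)
  then have "cellwise_breakdown mu X \<le> real m / real CARD('n)"
    by (rule orth_equivariant_cellwise_breakdown_le[OF assms])
  then show "cellwise_breakdown mu X \<le> of_int \<lceil>real CARD('n) / real CARD('d)\<rceil> / real CARD('n)"
    by (simp add: m_def)
qed

end
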